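(* Let $f:\Omega_D\to\mathbb{O}$ be the $O(3)$-slice function induced by an $O(3)$-stem function $\mathcal F:E\to\mathbb{O}^4$ of class $C^1$. Then $f$ is slice Fueter-regular if and only if there exists at least one $\mathbb{I}=(I,J)\in\mathcal N$ such that $\overline{\mathcal D}_{\mathbb I}f=0$ on $\Omega_{\mathbb I}$.
   Context: Octonions $\mathbb{O}=\mathbb{H}+\ell\mathbb{H}$ (product $(a+\ell b)(c+\ell d)=(ac-d\bar b)+\ell(\bar a d+cb)$), identified with $\mathbb{R}^8$; $\mathbb{S}=\{I:I^2=-1\}$. $D\subset\mathbb{R}^2$ non-empty open, invariant under $(x_0,x_1)\mapsto(x_0,-x_1)$, $\Omega_D=\{x_0+x_1I:(x_0,x_1)\in D,I\in\mathbb{S}\}$, assumed connected; $E=\{(x_0,\dots,x_3)\in\mathbb{R}^4:(x_0,(x_1^2+x_2^2+x_3^2)^{1/2})\in D\}$. $O(3)$: real orthogonal $4\times4$ matrices fixing the first basis vector, acting on $\mathbb{R}^4$, $\mathbb{O}^4$ by matrix–column multiplication. $\mathcal N=\{(I,J)\in\mathbb{S}^2:I\perp J\}$. An $O(3)$-stem function is $\mathcal F=(\mathcal F_0,\dots,\mathcal F_3):E\to\mathbb{O}^4$ with $\mathcal F(Av)=A\mathcal F(v)$; it induces the well-defined function $f(x_0+x_1I+x_2J+x_3(IJ))=\mathcal F_0(v)+I\mathcal F_1(v)+J\mathcal F_2(v)+(IJ)\mathcal F_3(v)$ ($v=(x_0,\dots,x_3)\in E$, $(I,J)\in\mathcal N$).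 $f$ is slice Fueter-regular if it is induced by such an $\mathcal F$ of class $C^1$ satisfying on $E$: $\partial_0\mathcal F_0-\partial_1\mathcal F_1-\partial_2\mathcal F_2-\partial_3\mathcal F_3=0$, $\partial_1\mathcal F_0+\partial_0\mathcal F_1-\partial_3\mathcal F_2+\partial_2\mathcal F_3=0$, $\partial_2\mathcal F_0+\partial_3\mathcal F_1+\partial_0\mathcal F_2-\partial_1\mathcal F_3=0$, $\partial_3\mathcal F_0-\partial_2\mathcal F_1+\partial_1\mathcal F_2+\partial_0\mathcal F_3=0$. For $\mathbb I=(I,J)\in\mathcal N$: $\mathbb{H}_{\mathbb I}=\mathrm{Span}_{\mathbb{R}}(1,I,J,IJ)$, $\Omega_{\mathbb I}=\Omega_D\cap\mathbb{H}_{\mathbb I}$, $f_{\mathbb I}(v)=f(x_0+x_1I+x_2J+x_3IJ)$ for $v\in E$, and $\overline{\mathcal D}_{\mathbb I}f(x)=\frac{\partial f_{\mathbb I}}{\partial x_0}(v)+I\frac{\partial f_{\mathbb I}}{\partial x_1}(v)+J\frac{\partial f_{\mathbb I}}{\partial x_2}(v)+(IJ)\frac{\partial f_{\mathbb I}}{\partial x_3}(v)$ where $x=x_0+x_1I+x_2J+x_3IJ$. *)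

theory Defs
  imports "HOL-Analysis.Analysis"
begin

text \<open>Quaternions are modelled as real^4 with coordinates (index 0,1,2,3) w.r.t. the
  basis 1, i, j, k; octonions O = H + l H as pairs of quaternions, so that O is
  identified with R^8 = R^4 x R^4 (Euclidean structure of the product type).\<close>

type_synonym quat = "real ^ 4"
type_synonym oct = "quat \<times> quat"

definition qmk :: "real \<Rightarrow> real \<Rightarrow> real \<Rightarrow> real \<Rightarrow> quat" where
  "qmk a b c d = (\<chi> i. if i = 0 then a else if i = 1 then b else if i = 2 then c else d)"

definition qmult :: "quat \<Rightarrow> quat \<Rightarrow> quat" where
  "qmult a b = qmk
     (a$0*b$0 - a$1*b$1 - a$2*b$2 - a$3*b$3)
     (a$0*b$1 + a$1*b$0 + a$2*b$3 - a$3*b$2)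
     (a$0*b$2 - a$1*b$3 + a$2*b$0 + a$3*b$1)
     (a$0*b$3 + a$1*b$2 - a$2*b$1 + a$3*b$0)"

definition qconj :: "quat \<Rightarrow> quat" where
  "qconj a = qmk (a$0) (- a$1) (- a$2) (- a$3)"

text \<open>(a + l b)(c + l d) = (a c - d conj(b)) + l (conj(a) d + c b)\<close>
definition omult :: "oct \<Rightarrow> oct \<Rightarrow> oct" where
  "omult x y = (case x of (a, b) \<Rightarrow> case y of (c, d) \<Rightarrow>
      (qmult a c - qmult d (qconj b), qmult (qconj a) d + qmult c b))"

definition oone :: oct where
  "oone = (qmk 1 0 0 0, 0)"

definition Sph :: "oct set" where
  "Sph = {I. omult I I = - oone}"

definition Nset :: "(oct \<times> oct) set" where
  "Nset = {(I, J). I \<in> Sph \<and> J \<in> Sph \<and> inner I J = 0}"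

definition OmegaD :: "(real \<times> real) set \<Rightarrow> oct set" where
  "OmegaD D = {x0 *\<^sub>R oone + x1 *\<^sub>R I | x0 x1 I. (x0, x1) \<in> D \<and> I \<in> Sph}"

definition Eset :: "(real \<times> real) set \<Rightarrow> (real ^ 4) set" where
  "Eset D = {v. (v$0, sqrt ((v$1)\<^sup>2 + (v$2)\<^sup>2 + (v$3)\<^sup>2)) \<in> D}"

definition opoint :: "oct \<Rightarrow> oct \<Rightarrow> real ^ 4 \<Rightarrow> oct" where
  "opoint I J v = v$0 *\<^sub>R oone + v$1 *\<^sub>R I + v$2 *\<^sub>R J + v$3 *\<^sub>R omult I J"

definition O3 :: "(real ^ 4 ^ 4) set" where
  "O3 = {A. orthogonal_matrix A \<and> A *v axis 0 1 = axis 0 1}"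

definition o3_stem :: "(real \<times> real) set \<Rightarrow> (4 \<Rightarrow> real ^ 4 \<Rightarrow> oct) \<Rightarrow> bool" where
  "o3_stem D F \<longleftrightarrow> (\<forall>A \<in> O3. \<forall>v \<in> Eset D. \<forall>i.
       F i (A *v v) = (\<Sum>j\<in>UNIV. (A $ i $ j) *\<^sub>R F j v))"

definition C1_on :: "(real ^ 4) set \<Rightarrow> (real ^ 4 \<Rightarrow> oct) \<Rightarrow> bool" where
  "C1_on S g \<longleftrightarrow> (\<exists>g'. (\<forall>v \<in> S. (g has_derivative blinfun_apply (g' v)) (at v))
                        \<and> continuous_on S g')"

definition stem_C1 :: "(real \<times> real) set \<Rightarrow> (4 \<Rightarrow> real ^ 4 \<Rightarrow> oct) \<Rightarrow> bool" where
  "stem_C1 D F \<longleftrightarrow> (\<forall>i. C1_on (Eset D) (F i))"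

definition induces :: "(real \<times> real) set \<Rightarrow> (4 \<Rightarrow> real ^ 4 \<Rightarrow> oct) \<Rightarrow> (oct \<Rightarrow> oct) \<Rightarrow> bool" where
  "induces D F f \<longleftrightarrow> (\<forall>(I, J) \<in> Nset. \<forall>v \<in> Eset D.
      f (opoint I J v) = F 0 v + omult I (F 1 v) + omult J (F 2 v) + omult (omult I J) (F 3 v))"

definition pder :: "(real ^ 4 \<Rightarrow> oct) \<Rightarrow> 4 \<Rightarrow> real ^ 4 \<Rightarrow> oct" where
  "pder g k v = vector_derivative (\<lambda>t. g (v + t *\<^sub>R axis k 1)) (at 0)"

definition fueter_system :: "(real \<times> real) set \<Rightarrow> (4 \<Rightarrow> real ^ 4 \<Rightarrow> oct) \<Rightarrow> bool" where
  "fueter_system D F \<longleftrightarrow> (\<forall>v \<in> Eset D.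
      pder (F 0) 0 v - pder (F 1) 1 v - pder (F 2) 2 v - pder (F 3) 3 v = 0 \<and>
      pder (F 0) 1 v + pder (F 1) 0 v - pder (F 2) 3 v + pder (F 3) 2 v = 0 \<and>
      pder (F 0) 2 v + pder (F 1) 3 v + pder (F 2) 0 v - pder (F 3) 1 v = 0 \<and>
      pder (F 0) 3 v - pder (F 1) 2 v + pder (F 2) 1 v + pder (F 3) 0 v = 0)"

definition slice_fueter_regular :: "(real \<times> real) set \<Rightarrow> (oct \<Rightarrow> oct) \<Rightarrow> bool" where
  "slice_fueter_regular D f \<longleftrightarrow>
     (\<exists>G. o3_stem D G \<and> stem_C1 D G \<and> induces D G f \<and> fueter_system D G)"

definition fI :: "(oct \<Rightarrow> oct) \<Rightarrow> oct \<Rightarrow> oct \<Rightarrow> real ^ 4 \<Rightarrow> oct" where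
  "fI f I J v = f (opoint I J v)"

definition DbarI :: "(oct \<Rightarrow> oct) \<Rightarrow> oct \<Rightarrow> oct \<Rightarrow> real ^ 4 \<Rightarrow> oct" where
  "DbarI f I J v = pder (fI f I J) 0 v + omult I (pder (fI f I J) 1 v)
     + omult J (pder (fI f I J) 2 v) + omult (omult I J) (pder (fI f I J) 3 v)"

text \<open>Omega_I = Omega_D intersected with H_I.\<close>
definition HI :: "oct \<Rightarrow> oct \<Rightarrow> oct set" where
  "HI I J = span {oone, I, J, omult I J}"

end

theory Submission
  imports Defs
begin

text \<open>On the slice through an orthogonal pair \<open>(I, J)\<close> with \<open>K = IJ\<close>, the function \<open>f\<close> is
  \<open>F\<^sub>0 + I F\<^sub>1 + J F\<^sub>2 + K F\<^sub>3\<close>, so \<open>Dbar_I f\<close> is an octonionic combination of the partials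
  \<open>X k j = \<partial>\<^sub>k F\<^sub>j\<close>. Left multiplications by \<open>I\<close>, \<open>J\<close>, \<open>K\<close> square to \<open>-1\<close> and pairwise
  anticommute, hence \<open>Dbar_I f = c + I y\<^sub>1 + J y\<^sub>2 + K y\<^sub>3 + I (J z\<^sub>1\<^sub>2) + I (K z\<^sub>1\<^sub>3) + J (K z\<^sub>2\<^sub>3)\<close>
  with \<open>c = X 0 0 - X 1 1 - X 2 2 - X 3 3\<close>, \<open>y\<^sub>i = X i 0 + X 0 i\<close> and \<open>z\<^sub>i\<^sub>j = X i j - X j i\<close>,
  while the Fueter system says \<open>c = 0\<close>, \<open>y\<^sub>1 + z\<^sub>2\<^sub>3 = 0\<close>, \<open>y\<^sub>2 - z\<^sub>1\<^sub>3 = 0\<close>, \<open>y\<^sub>3 + z\<^sub>1\<^sub>2 = 0\<close>.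
  The reflections \<open>diag(1, \<plusminus>1, \<plusminus>1, \<plusminus>1)\<close> lie in \<open>O(3)\<close>, and equivariance of \<open>F\<close> multiplies
  \<open>c\<close>, \<open>y\<^sub>i\<close>, \<open>z\<^sub>i\<^sub>j\<close> by the characters \<open>1\<close>, \<open>s\<^sub>i\<close>, \<open>s\<^sub>i s\<^sub>j\<close> of the sign group. Imposing either
  condition at all reflected points therefore forces each of the seven pieces to vanish
  (orthogonality of characters, and injectivity of left multiplication by a unit), so both
  conditions are equivalent to the vanishing of the seven pieces on \<open>E\<close>, whatever \<open>(I, J)\<close> is.
  The symmetry of \<open>D\<close> makes \<open>\<Omega>\<^sub>D \<inter> \<bbbH>\<^sub>I\<close> exactly the image of \<open>E\<close>.\<close>

lemma UNIV_4_eq: "(UNIV::4 set) = {0, 1, 2, 3}"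
proof -
  have "(4::4) = 0" by simp
  then show ?thesis using UNIV_4 by auto
qed

lemma all_4_iff: "(\<forall>i::4. P i) \<longleftrightarrow> P 0 \<and> P 1 \<and> P 2 \<and> P 3"
  by (metis UNIV_4_eq UNIV_I empty_iff insert_iff)

lemma sum_UNIV_4: "sum f (UNIV::4 set) = f 0 + f 1 + f 2 + f 3"
  unfolding UNIV_4_eq by (simp add: add.assoc)

lemma qmk_nth [simp]:
  "qmk a b c d $ 0 = a" "qmk a b c d $ 1 = b" "qmk a b c d $ 2 = c" "qmk a b c d $ 3 = d"
  by (simp_all add: qmk_def)

lemma quat_eq_iff: "(x::quat) = y \<longleftrightarrow> x$0 = y$0 \<and> x$1 = y$1 \<and> x$2 = y$2 \<and> x$3 = y$3"
  by (simp only: vec_eq_iff all_4_iff)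

lemma oct_eq_iff: "(x::oct) = y \<longleftrightarrow>
    fst x$0 = fst y$0 \<and> fst x$1 = fst y$1 \<and> fst x$2 = fst y$2 \<and> fst x$3 = fst y$3 \<and>
    snd x$0 = snd y$0 \<and> snd x$1 = snd y$1 \<and> snd x$2 = snd y$2 \<and> snd x$3 = snd y$3"
  by (simp only: prod_eq_iff quat_eq_iff conj_assoc)

lemma omult_eq: "omult x y =
    (qmult (fst x) (fst y) - qmult (snd y) (qconj (snd x)), qmult (qconj (fst x)) (snd y) + qmult (fst y) (snd x))"
  by (simp add: omult_def split: prod.splits)

lemma inner_oct: "inner (x::oct) y =
    fst x$0 * fst y$0 + fst x$1 * fst y$1 + fst x$2 * fst y$2 + fst x$3 * fst y$3 +
    snd x$0 * snd y$0 + snd x$1 * snd y$1 + snd x$2 * snd y$2 + snd x$3 * snd y$3"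
  by (simp add: inner_prod_def inner_vec_def sum_UNIV_4)

lemmas oct_coordinates = omult_eq qmult_def qconj_def oone_def oct_eq_iff

lemma omult_oone [simp]: "omult oone x = x" "omult x oone = x"
  by (simp_all add: oct_coordinates)

lemma bilinear_omult: "bilinear omult"
  by (simp add: bilinear_def linear_iff oct_coordinates algebra_simps)

interpretation omult: bounded_bilinear omult
  using bilinear_omult bilinear_conv_bounded_bilinear by blast

lemmas omult_linear = omult.add_left omult.add_right omult.diff_left omult.diff_right
  omult.minus_left omult.minus_right omult.scaleR_left omult.scaleR_right

lemma omult_polarized_left_alternative:
  "omult a (omult b x) + omult b (omult a x) = omult (omult a b + omult b a) x"
  by (simp add: oct_coordinates algebra_simps)

lemma omult_right_alternative: "omult (omult x a) a = omult x (omult a a)"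
  by (simp add: oct_coordinates algebra_simps)

definition oct_re :: "oct \<Rightarrow> real" where
  "oct_re x = fst x $ 0"

lemma oct_re_simps [simp]:
  "oct_re oone = 1" "oct_re (x + y) = oct_re x + oct_re y" "oct_re (x - y) = oct_re x - oct_re y"
  "oct_re (- x) = - oct_re x" "oct_re (c *\<^sub>R x) = c * oct_re x"
  by (simp_all add: oct_re_def oone_def)

lemma omult_imaginary_self: "oct_re x = 0 \<Longrightarrow> omult x x = - inner x x *\<^sub>R oone"
  by (simp add: oct_re_def inner_oct oct_coordinates algebra_simps)

lemma omult_imaginary_anticommutator:
  "oct_re x = 0 \<Longrightarrow> oct_re y = 0 \<Longrightarrow> omult x y + omult y x = - (2 * inner x y) *\<^sub>R oone"
  by (simp add: oct_re_def inner_oct oct_coordinates algebra_simps)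

lemma oct_re_omult_imaginary: "oct_re x = 0 \<Longrightarrow> oct_re y = 0 \<Longrightarrow> oct_re (omult x y) = - inner x y"
  by (simp add: oct_re_def inner_oct oct_coordinates algebra_simps)

lemma Sph_imp_oct_re_eq_0:
  assumes "I \<in> Sph"
  shows "oct_re I = 0"
proof (rule ccontr)
  assume "oct_re I \<noteq> 0"
  have sq: "omult I I = - oone"
    using assms by (simp add: Sph_def)
  \<comment> \<open>the imaginary coordinates of \<open>I\<^sup>2\<close> are \<open>2 oct_re I\<close> times those of \<open>I\<close>\<close>
  then have "fst I$1 = 0 \<and> fst I$2 = 0 \<and> fst I$3 = 0 \<and> snd I$0 = 0 \<and> snd I$1 = 0 \<and> snd I$2 = 0 \<and> snd I$3 = 0"
    using \<open>oct_re I \<noteq> 0\<close> by (simp add: oct_re_def oct_coordinates algebra_simps)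
  with sq have "oct_re I * oct_re I = -1"
    by (simp add: oct_re_def oct_coordinates)
  then show False
    by (metis neg_0_le_iff_le not_one_le_zero zero_le_square)
qed

lemma Sph_iff: "I \<in> Sph \<longleftrightarrow> oct_re I = 0 \<and> inner I I = 1"
proof
  assume I: "I \<in> Sph"
  then have re: "oct_re I = 0"
    by (rule Sph_imp_oct_re_eq_0)
  have "inner I I *\<^sub>R oone = 1 *\<^sub>R oone"
    using I omult_imaginary_self[OF re] by (simp add: Sph_def)
  moreover have "oone \<noteq> 0"
    by (simp add: oone_def oct_eq_iff)
  ultimately show "oct_re I = 0 \<and> inner I I = 1"
    using re scaleR_cancel_right by blast
next
  assume "oct_re I = 0 \<and> inner I I = 1"
  then show "I \<in> Sph"
    using omult_imaginary_self[of I] by (simp add: Sph_def)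
qed

lemma Sph_omult_left_twice:
  assumes "I \<in> Sph"
  shows "omult I (omult I x) = - x"
proof -
  have "2 *\<^sub>R omult I (omult I x) = 2 *\<^sub>R (- x)"
    using omult_polarized_left_alternative[of I I x] assms
    by (simp add: Sph_def omult_linear flip: scaleR_2)
  then show ?thesis
    by (metis scaleR_cancel_left zero_neq_numeral)
qed

lemma Sph_omult_left_eq_0_iff:
  assumes "I \<in> Sph"
  shows "omult I x = 0 \<longleftrightarrow> x = 0"
  using Sph_omult_left_twice[OF assms, of x] by (auto simp: omult.zero_right)

locale orthogonal_units =
  fixes I J :: oct
  assumes in_Nset: "(I, J) \<in> Nset"
begin

definition K :: oct where
  "K = omult I J"

lemma I_in_Sph: "I \<in> Sph" and J_in_Sph: "J \<in> Sph" and inner_I_J: "inner I J = 0"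
  using in_Nset by (auto simp: Nset_def)

lemma oct_re_I: "oct_re I = 0" and oct_re_J: "oct_re J = 0"
  using I_in_Sph J_in_Sph Sph_iff by auto

lemma J_I: "omult J I = - K"
  using omult_imaginary_anticommutator[OF oct_re_I oct_re_J] inner_I_J
  by (simp add: K_def eq_neg_iff_add_eq_0 add.commute)

lemma I_K: "omult I K = - J"
  unfolding K_def by (rule Sph_omult_left_twice[OF I_in_Sph])

lemma K_I: "omult K I = J"
  using omult_right_alternative[of J I] I_in_Sph by (simp add: J_I Sph_def omult_linear)

lemma K_J: "omult K J = - I"
  using omult_right_alternative[of I J] J_in_Sph by (simp add: K_def Sph_def omult_linear)

lemma J_K: "omult J K = I"
  using omult_polarized_left_alternative[of J I J] J_in_Sph
  by (simp add: J_I K_def Sph_def omult_linear omult.zero_left)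

lemma K_in_Sph: "K \<in> Sph"
proof -
  have "omult K (omult I J) + omult I (omult K J) = omult (omult K I + omult I K) J"
    by (rule omult_polarized_left_alternative)
  then have "omult K K + oone = 0"
    using I_in_Sph by (simp add: K_I I_K K_J Sph_def omult_linear omult.zero_left flip: K_def)
  then show ?thesis
    by (simp add: Sph_def eq_neg_iff_add_eq_0)
qed

lemma oct_re_K: "oct_re K = 0"
  using K_in_Sph Sph_iff by blast

lemma inner_I_K: "inner I K = 0"
  using oct_re_omult_imaginary[OF oct_re_I oct_re_K] oct_re_J by (simp add: I_K)

lemma inner_J_K: "inner J K = 0"
  using oct_re_omult_imaginary[OF oct_re_J oct_re_K] oct_re_I by (simp add: J_K)

lemma omult_left_anticommute:
  "omult J (omult I y) = - omult I (omult J y)"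
  "omult K (omult I y) = - omult I (omult K y)"
  "omult K (omult J y) = - omult J (omult K y)"
  using omult_polarized_left_alternative[of J I y] omult_polarized_left_alternative[of K I y]
    omult_polarized_left_alternative[of K J y]
  by (simp_all add: J_I K_I K_J I_K J_K omult.zero_left flip: K_def eq_neg_iff_add_eq_0)

lemma oct_re_frame: "oct_re (a *\<^sub>R I + b *\<^sub>R J + c *\<^sub>R K) = 0"
  by (simp add: oct_re_I oct_re_J oct_re_K)

lemma inner_frame: "inner (a *\<^sub>R I + b *\<^sub>R J + c *\<^sub>R K) (a *\<^sub>R I + b *\<^sub>R J + c *\<^sub>R K) = a\<^sup>2 + b\<^sup>2 + c\<^sup>2"
  using I_in_Sph J_in_Sph K_in_Sph inner_I_J inner_I_K inner_J_K
  by (simp add: Sph_iff inner_commute power2_eq_square algebra_simps)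

lemma opoint_eq: "opoint I J v = v$0 *\<^sub>R oone + (v$1 *\<^sub>R I + v$2 *\<^sub>R J + v$3 *\<^sub>R K)"
  by (simp add: opoint_def K_def algebra_simps)

lemma opoint_in_OmegaD_iff:
  assumes symmetric: "\<forall>x0 x1. (x0, x1) \<in> D \<longrightarrow> (x0, - x1) \<in> D"
  shows "opoint I J v \<in> OmegaD D \<longleftrightarrow> v \<in> Eset D"
proof -
  define w where "w = v$1 *\<^sub>R I + v$2 *\<^sub>R J + v$3 *\<^sub>R K"
  define r where "r = sqrt ((v$1)\<^sup>2 + (v$2)\<^sup>2 + (v$3)\<^sup>2)"
  have r_nonneg: "r \<ge> 0"
    by (simp add: r_def)
  have re_w: "oct_re w = 0"
    unfolding w_def by (rule oct_re_frame)
  have inner_w: "inner w w = r\<^sup>2"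
    by (simp add: w_def r_def inner_frame)
  have opoint: "opoint I J v = v$0 *\<^sub>R oone + w"
    by (simp add: opoint_eq w_def)
  show ?thesis
  proof
    assume "opoint I J v \<in> OmegaD D"
    then obtain x0 x1 L where D: "(x0, x1) \<in> D" and L: "L \<in> Sph"
      and eq: "v$0 *\<^sub>R oone + w = x0 *\<^sub>R oone + x1 *\<^sub>R L"
      by (auto simp: OmegaD_def opoint)
    have "v$0 = x0"
      using arg_cong[OF eq, of oct_re] re_w L by (simp add: Sph_iff)
    with eq have "w = x1 *\<^sub>R L"
      by simp
    then have "r\<^sup>2 = \<bar>x1\<bar>\<^sup>2"
      using inner_w L by (simp add: Sph_iff power2_eq_square)
    then have "r = \<bar>x1\<bar>"
      using r_nonneg by (metis abs_ge_zero power2_eq_iff_nonneg)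
    moreover have "(x0, \<bar>x1\<bar>) \<in> D"
      using D symmetric by (cases "x1 \<ge> 0") auto
    ultimately show "v \<in> Eset D"
      using \<open>v$0 = x0\<close> by (simp add: Eset_def r_def)
  next
    assume "v \<in> Eset D"
    then have D: "(v$0, r) \<in> D"
      by (simp add: Eset_def r_def)
    show "opoint I J v \<in> OmegaD D"
    proof (cases "r = 0")
      case True
      then have "opoint I J v = v$0 *\<^sub>R oone + r *\<^sub>R I"
        using inner_w by (simp add: opoint)
      then show ?thesis
        using D I_in_Sph unfolding OmegaD_def by blast
    next
      case False
      define L where "L = (1 / r) *\<^sub>R w"
      have "L \<in> Sph"
        using False re_w inner_w by (simp add: Sph_iff L_def power2_eq_square)
      moreover have "opoint I J v = v$0 *\<^sub>R oone + r *\<^sub>R L"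
        using False by (simp add: opoint L_def)
      ultimately show ?thesis
        using D unfolding OmegaD_def by blast
    qed
  qed
qed

end

lemma opoint_in_HI: "opoint I J v \<in> HI I J"
  unfolding opoint_def HI_def by (intro span_add span_scale span_base) auto

lemma standard_units_in_Nset: "((qmk 0 1 0 0, 0), (qmk 0 0 1 0, 0)) \<in> Nset"
  by (simp add: Nset_def Sph_def inner_oct oct_coordinates)

lemma open_Eset:
  assumes "open D"
  shows "open (Eset D)"
proof -
  have "Eset D = (\<lambda>v. (v$0, sqrt ((v$1)\<^sup>2 + (v$2)\<^sup>2 + (v$3)\<^sup>2))) -` D"
    by (auto simp: Eset_def)
  also have "open \<dots>"
    by (intro open_vimage assms continuous_intros)
  finally show ?thesis .
qed

lemma pder_eq_derivative:
  assumes h: "(h has_derivative L) (at v)"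
  shows "pder h k v = L (axis k 1)"
proof -
  have "((\<lambda>t::real. v + t *\<^sub>R axis k 1) has_derivative (\<lambda>t. t *\<^sub>R axis k 1)) (at 0)"
    by (auto intro!: derivative_eq_intros)
  then have "((h \<circ> (\<lambda>t. v + t *\<^sub>R axis k 1)) has_derivative (L \<circ> (\<lambda>t. t *\<^sub>R axis k 1))) (at 0)"
    by (rule diff_chain_at) (simp add: h)
  moreover have "L \<circ> (\<lambda>t. t *\<^sub>R axis k 1) = (\<lambda>t. t *\<^sub>R L (axis k 1))"
    using linear_scale[OF has_derivative_linear[OF h]] by (auto simp: fun_eq_iff)
  ultimately have "((\<lambda>t. h (v + t *\<^sub>R axis k 1)) has_vector_derivative L (axis k 1)) (at 0)"
    by (simp add: has_vector_derivative_def comp_def)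
  then show ?thesis
    unfolding pder_def by (rule vector_derivative_at)
qed

lemma pder_eq_derivative_on_open:
  assumes "(g has_derivative L) (at v)" "open S" "v \<in> S" "\<And>w. w \<in> S \<Longrightarrow> g w = h w"
  shows "pder h k v = L (axis k 1)"
  using has_derivative_transform_within_open[OF assms] by (rule pder_eq_derivative)

lemma stem_C1_has_derivative:
  "stem_C1 D F \<Longrightarrow> v \<in> Eset D \<Longrightarrow> \<exists>L. (F i has_derivative L) (at v)"
  by (auto simp: stem_C1_def C1_on_def)

definition stem_partials :: "(4 \<Rightarrow> real ^ 4 \<Rightarrow> oct) \<Rightarrow> real ^ 4 \<Rightarrow> 4 \<Rightarrow> 4 \<Rightarrow> oct" where
  "stem_partials F v k j = pder (F j) k v"

lemma pder_fI:
  assumes "open D" "stem_C1 D F" "induces D F f" "(I, J) \<in> Nset" "v \<in> Eset D"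
  shows "pder (fI f I J) k v = pder (F 0) k v + omult I (pder (F 1) k v) + omult J (pder (F 2) k v)
    + omult (omult I J) (pder (F 3) k v)"
proof -
  obtain L where L: "\<And>i. (F i has_derivative L i) (at v)"
    using stem_C1_has_derivative[OF assms(2,5)] by metis
  have "((\<lambda>w. F 0 w + omult I (F 1 w) + omult J (F 2 w) + omult (omult I J) (F 3 w)) has_derivative
      (\<lambda>w. L 0 w + omult I (L 1 w) + omult J (L 2 w) + omult (omult I J) (L 3 w))) (at v)"
    by (intro has_derivative_add omult.bounded_linear_right[THEN bounded_linear.has_derivative] L)
  moreover have "\<And>w. w \<in> Eset D \<Longrightarrow>
      F 0 w + omult I (F 1 w) + omult J (F 2 w) + omult (omult I J) (F 3 w) = fI f I J w"
    using assms(3,4) by (auto simp: induces_def fI_def)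
  ultimately have "pder (fI f I J) k v =
      L 0 (axis k 1) + omult I (L 1 (axis k 1)) + omult J (L 2 (axis k 1)) + omult (omult I J) (L 3 (axis k 1))"
    by (rule pder_eq_derivative_on_open[OF _ open_Eset[OF assms(1)] assms(5)])
  moreover have "\<And>i. pder (F i) k v = L i (axis k 1)"
    using pder_eq_derivative[OF L] by blast
  ultimately show ?thesis
    by simp
qed

definition sign_vector :: "(4 \<Rightarrow> real) \<Rightarrow> bool" where
  "sign_vector s \<longleftrightarrow> s 0 = 1 \<and> (\<forall>i. s i = 1 \<or> s i = -1)"

definition sign_matrix :: "(4 \<Rightarrow> real) \<Rightarrow> real ^ 4 ^ 4" where
  "sign_matrix s = (\<chi> i j. if i = j then s i else 0)"

definition sign_twist :: "(4 \<Rightarrow> real) \<Rightarrow> (4 \<Rightarrow> 4 \<Rightarrow> 'a::real_vector) \<Rightarrow> 4 \<Rightarrow> 4 \<Rightarrow> 'a" where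
  "sign_twist s X k j = (s j * s k) *\<^sub>R X k j"

lemma sign_vector_square: "sign_vector s \<Longrightarrow> s i * s i = 1"
  unfolding sign_vector_def by (metis mult_1_right mult_minus1_right minus_minus)

lemma sign_matrix_mult: "sign_matrix s *v v = (\<chi> i. s i * v$i)"
  by (simp add: sign_matrix_def matrix_vector_mult_def vec_eq_iff sum_UNIV_4 all_4_iff)

lemma sign_matrix_involutive: "sign_vector s \<Longrightarrow> sign_matrix s *v (sign_matrix s *v v) = v"
  by (simp add: sign_matrix_mult vec_eq_iff sign_vector_square mult.assoc[symmetric])

lemma sign_matrix_axis: "sign_matrix s *v axis k 1 = s k *\<^sub>R axis k 1"
  by (auto simp: sign_matrix_mult axis_def vec_eq_iff)

definition signs :: "real \<Rightarrow> real \<Rightarrow> real \<Rightarrow> 4 \<Rightarrow> real" where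
  "signs a b c i = (if i = 1 then a else if i = 2 then b else if i = 3 then c else 1)"

lemma signs_nth [simp]: "signs a b c 1 = a" "signs a b c 2 = b" "signs a b c 3 = c"
  by (simp_all add: signs_def)

lemma sign_vector_signs: "a \<in> {1, -1} \<Longrightarrow> b \<in> {1, -1} \<Longrightarrow> c \<in> {1, -1} \<Longrightarrow> sign_vector (signs a b c)"
  by (auto simp: sign_vector_def signs_def)

lemma sign_vector_0: "sign_vector s \<Longrightarrow> s 0 = 1"
  by (simp add: sign_vector_def)

lemma sign_twist_diag: "sign_vector s \<Longrightarrow> sign_twist s X i i = X i i"
  by (simp add: sign_twist_def sign_vector_square)

lemma sign_twist_add_transpose: "sign_twist s X i j + sign_twist s X j i = (s i * s j) *\<^sub>R (X i j + X j i)"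
  by (simp add: sign_twist_def scaleR_right_distrib mult.commute)

lemma sign_twist_diff_transpose: "sign_twist s X i j - sign_twist s X j i = (s i * s j) *\<^sub>R (X i j - X j i)"
  by (simp add: sign_twist_def scaleR_right_diff_distrib mult.commute)

lemmas sign_twist_pieces = sign_vector_0 sign_twist_diag sign_twist_add_transpose sign_twist_diff_transpose

lemma sign_matrix_in_O3:
  assumes "sign_vector s"
  shows "sign_matrix s \<in> O3"
proof -
  have "transpose (sign_matrix s) ** sign_matrix s = mat 1" "sign_matrix s ** transpose (sign_matrix s) = mat 1"
    using assms by (simp_all add: sign_matrix_def matrix_matrix_mult_def transpose_def mat_def vec_eq_iff
        sum_UNIV_4 all_4_iff sign_vector_square)
  moreover have "sign_matrix s *v axis 0 1 = axis 0 1"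
    using assms by (simp add: sign_matrix_axis sign_vector_def)
  ultimately show ?thesis
    by (simp add: O3_def orthogonal_matrix_def)
qed

lemma sign_matrix_mult_in_Eset:
  assumes "sign_vector s" "v \<in> Eset D"
  shows "sign_matrix s *v v \<in> Eset D"
proof -
  have "(s i * x)\<^sup>2 = x\<^sup>2" for i x
    using sign_vector_square[OF assms(1), of i] by (simp add: power2_eq_square algebra_simps)
  then show ?thesis
    using assms by (simp add: Eset_def sign_matrix_mult sign_vector_def)
qed

lemma o3_stem_sign_matrix:
  assumes "o3_stem D F" "sign_vector s" "v \<in> Eset D"
  shows "F a (sign_matrix s *v v) = s a *\<^sub>R F a v"
proof -
  have "F a (sign_matrix s *v v) = (\<Sum>j\<in>UNIV. (sign_matrix s $ a $ j) *\<^sub>R F j v)"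
    using assms sign_matrix_in_O3 by (simp add: o3_stem_def)
  also have "\<dots> = (\<Sum>j\<in>UNIV. if a = j then s a *\<^sub>R F j v else 0)"
    by (rule sum.cong) (auto simp: sign_matrix_def)
  finally show ?thesis
    by simp
qed

lemma stem_partials_sign_matrix:
  assumes "open D" "o3_stem D F" "stem_C1 D F" and s: "sign_vector s" and v: "v \<in> Eset D"
  shows "stem_partials F (sign_matrix s *v v) = sign_twist s (stem_partials F v)"
proof (intro ext)
  fix k j
  let ?S = "(*v) (sign_matrix s)"
  obtain L where L: "(F j has_derivative L) (at v)"
    using stem_C1_has_derivative[OF assms(3) v] by blast
  \<comment> \<open>near \<open>S v\<close>, equivariance writes \<open>F j\<close> as \<open>s j\<close> times \<open>F j \<circ> S\<close>, since \<open>S\<close> is an involution\<close>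
  have "((F j \<circ> ?S) has_derivative (L \<circ> ?S)) (at (?S v))"
    by (rule diff_chain_at) (auto intro: bounded_linear_imp_has_derivative simp: sign_matrix_involutive[OF s] L)
  then have "((\<lambda>u. s j *\<^sub>R F j (?S u)) has_derivative (\<lambda>u. s j *\<^sub>R L (?S u))) (at (?S v))"
    by (simp add: comp_def has_derivative_scaleR_right)
  moreover have "s j *\<^sub>R F j (?S u) = F j u" if "u \<in> Eset D" for u
    using o3_stem_sign_matrix[OF assms(2) s sign_matrix_mult_in_Eset[OF s that], of j]
    by (simp add: sign_matrix_involutive[OF s])
  ultimately have "pder (F j) k (?S v) = s j *\<^sub>R L (?S (axis k 1))"
    by (rule pder_eq_derivative_on_open[OF _ open_Eset[OF assms(1)] sign_matrix_mult_in_Eset[OF s v]])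
  also have "\<dots> = (s j * s k) *\<^sub>R L (axis k 1)"
    using linear_scale[OF has_derivative_linear[OF L]] by (simp add: sign_matrix_axis)
  finally show "stem_partials F (?S v) k j = sign_twist s (stem_partials F v) k j"
    using pder_eq_derivative[OF L] by (simp add: stem_partials_def sign_twist_def)
qed

lemma add_eq_0_and_neg_add_eq_0_iff:
  fixes a b :: "'a::real_vector"
  shows "a + b = 0 \<and> - a + b = 0 \<longleftrightarrow> a = 0 \<and> b = 0"
proof
  assume sums: "a + b = 0 \<and> - a + b = 0"
  have "2 *\<^sub>R b = (a + b) + (- a + b)"
    by (simp add: scaleR_2)
  also have "\<dots> = 0"
    using sums by (metis add.right_neutral)
  finally show "a = 0 \<and> b = 0"
    using sums by simp
qed simp

lemma sign_character_expansion_eq_0: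
  fixes c y1 y2 y3 z12 z13 z23 :: "'a::real_inner"
  assumes expansion: "\<And>s1 s2 s3. s1 \<in> {1, -1} \<Longrightarrow> s2 \<in> {1, -1} \<Longrightarrow> s3 \<in> {1, -1} \<Longrightarrow>
    c + s1 *\<^sub>R y1 + s2 *\<^sub>R y2 + s3 *\<^sub>R y3 + (s1 * s2) *\<^sub>R z12 + (s1 * s3) *\<^sub>R z13 + (s2 * s3) *\<^sub>R z23 = 0"
  shows "c = 0 \<and> y1 = 0 \<and> y2 = 0 \<and> y3 = 0 \<and> z12 = 0 \<and> z13 = 0 \<and> z23 = 0"
proof -
  \<comment> \<open>testing against a vector \<open>w\<close> reduces this to the orthogonality of the characters of \<open>{1, -1}\<^sup>3\<close>\<close>
  have orthogonal: "inner c w = 0 \<and> inner y1 w = 0 \<and> inner y2 w = 0 \<and> inner y3 w = 0 \<and>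
      inner z12 w = 0 \<and> inner z13 w = 0 \<and> inner z23 w = 0" for w
  proof -
    have "inner c w + s1 * inner y1 w + s2 * inner y2 w + s3 * inner y3 w + (s1 * s2) * inner z12 w
        + (s1 * s3) * inner z13 w + (s2 * s3) * inner z23 w = 0"
      if "s1 \<in> {1, -1}" "s2 \<in> {1, -1}" "s3 \<in> {1, -1}" for s1 s2 s3
      using arg_cong[OF expansion[OF that], of "\<lambda>x. inner x w"] by (simp add: inner_add_left)
    from this[of 1 1 1] this[of "-1" 1 1] this[of 1 "-1" 1] this[of 1 1 "-1"]
      this[of "-1" "-1" 1] this[of "-1" 1 "-1"] this[of 1 "-1" "-1"] this[of "-1" "-1" "-1"]
    show ?thesis
      by simp
  qed
  show ?thesis
    using orthogonal[of c] orthogonal[of y1] orthogonal[of y2] orthogonal[of y3]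
      orthogonal[of z12] orthogonal[of z13] orthogonal[of z23]
    by simp
qed

definition fueter_eqs :: "(4 \<Rightarrow> 4 \<Rightarrow> 'a::real_vector) \<Rightarrow> bool" where
  "fueter_eqs X \<longleftrightarrow>
     X 0 0 - X 1 1 - X 2 2 - X 3 3 = 0 \<and> X 1 0 + X 0 1 - X 3 2 + X 2 3 = 0 \<and>
     X 2 0 + X 3 1 + X 0 2 - X 1 3 = 0 \<and> X 3 0 - X 2 1 + X 1 2 + X 0 3 = 0"

lemma fueter_system_iff_fueter_eqs:
  "fueter_system D F \<longleftrightarrow> (\<forall>v\<in>Eset D. fueter_eqs (stem_partials F v))"
  by (simp add: fueter_system_def fueter_eqs_def stem_partials_def)

definition split_fueter :: "(4 \<Rightarrow> 4 \<Rightarrow> 'a::real_vector) \<Rightarrow> bool" where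
  "split_fueter X \<longleftrightarrow>
     X 0 0 - X 1 1 - X 2 2 - X 3 3 = 0 \<and> X 1 0 + X 0 1 = 0 \<and> X 2 0 + X 0 2 = 0 \<and> X 3 0 + X 0 3 = 0 \<and>
     X 1 2 = X 2 1 \<and> X 1 3 = X 3 1 \<and> X 2 3 = X 3 2"

lemma fueter_eqs_regroup:
  fixes X :: "4 \<Rightarrow> 4 \<Rightarrow> 'a::real_vector"
  shows "X 1 0 + X 0 1 - X 3 2 + X 2 3 = (X 1 0 + X 0 1) + (X 2 3 - X 3 2)"
    and "X 2 0 + X 3 1 + X 0 2 - X 1 3 = (X 2 0 + X 0 2) + (X 3 1 - X 1 3)"
    and "X 3 0 - X 2 1 + X 1 2 + X 0 3 = (X 3 0 + X 0 3) + (X 1 2 - X 2 1)"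
  by (simp_all add: algebra_simps)

lemma split_fueter_imp_fueter_eqs: "split_fueter X \<Longrightarrow> fueter_eqs X"
  unfolding fueter_eqs_def fueter_eqs_regroup by (simp add: split_fueter_def)

lemma sign_twists_fueter_eqs_imp_split_fueter:
  assumes twists: "\<And>s. sign_vector s \<Longrightarrow> fueter_eqs (sign_twist s X)"
  shows "split_fueter X"
proof -
  have twisted: "X 0 0 - X 1 1 - X 2 2 - X 3 3 = 0 \<and>
      s 1 *\<^sub>R (X 1 0 + X 0 1) + (s 2 * s 3) *\<^sub>R (X 2 3 - X 3 2) = 0 \<and>
      s 2 *\<^sub>R (X 2 0 + X 0 2) + (s 3 * s 1) *\<^sub>R (X 3 1 - X 1 3) = 0 \<and>
      s 3 *\<^sub>R (X 3 0 + X 0 3) + (s 1 * s 2) *\<^sub>R (X 1 2 - X 2 1) = 0" if s: "sign_vector s" for s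
    using twists[OF s] s unfolding fueter_eqs_def fueter_eqs_regroup by (simp add: sign_twist_pieces)
  have "sign_vector (signs 1 1 1)" "sign_vector (signs (-1) 1 1)" "sign_vector (signs 1 (-1) 1)"
      "sign_vector (signs 1 1 (-1))"
    by (simp_all add: sign_vector_signs)
  note instances = this[THEN twisted, unfolded signs_nth mult_1_left mult_1_right scaleR_one scaleR_minus1_left]
  \<comment> \<open>flipping the sign of \<open>x\<^sub>i\<close> changes the sign of exactly one of the two pieces in the \<open>i\<close>-th equation\<close>
  have "(X 1 0 + X 0 1) + (X 2 3 - X 3 2) = 0 \<and> - (X 1 0 + X 0 1) + (X 2 3 - X 3 2) = 0"
      "(X 2 0 + X 0 2) + (X 3 1 - X 1 3) = 0 \<and> - (X 2 0 + X 0 2) + (X 3 1 - X 1 3) = 0"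
      "(X 3 0 + X 0 3) + (X 1 2 - X 2 1) = 0 \<and> - (X 3 0 + X 0 3) + (X 1 2 - X 2 1) = 0"
    using instances by blast+
  then show ?thesis
    using instances(1) unfolding add_eq_0_and_neg_add_eq_0_iff by (simp add: split_fueter_def)
qed

lemma partials_condition_iff_split_fueter:
  assumes "open D" "o3_stem D F" "stem_C1 D F"
    and twists: "\<And>X. (\<And>s. sign_vector s \<Longrightarrow> P (sign_twist s X)) \<Longrightarrow> split_fueter X"
    and split: "\<And>X. split_fueter X \<Longrightarrow> P X"
  shows "(\<forall>v\<in>Eset D. P (stem_partials F v)) \<longleftrightarrow> (\<forall>v\<in>Eset D. split_fueter (stem_partials F v))"
proof (intro iffI ballI)
  fix v
  assume P: "\<forall>v\<in>Eset D. P (stem_partials F v)" and v: "v \<in> Eset D"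
  show "split_fueter (stem_partials F v)"
  proof (rule twists)
    fix s
    assume s: "sign_vector s"
    have "P (stem_partials F (sign_matrix s *v v))"
      using P sign_matrix_mult_in_Eset[OF s v] by blast
    then show "P (sign_twist s (stem_partials F v))"
      by (simp add: stem_partials_sign_matrix[OF assms(1-3) s v])
  qed
qed (use split in blast)

lemma fueter_system_iff_split_fueter:
  assumes "open D" "o3_stem D F" "stem_C1 D F"
  shows "fueter_system D F \<longleftrightarrow> (\<forall>v\<in>Eset D. split_fueter (stem_partials F v))"
  unfolding fueter_system_iff_fueter_eqs
  using partials_condition_iff_split_fueter[OF assms sign_twists_fueter_eqs_imp_split_fueter
      split_fueter_imp_fueter_eqs] .

context orthogonal_units
begin

text \<open>The nested products cannot be merged: octonion multiplication is not associative, so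
  \<open>I (J y)\<close> differs from \<open>K y\<close> in general.\<close>

definition dbar_form :: "(4 \<Rightarrow> 4 \<Rightarrow> oct) \<Rightarrow> oct" where
  "dbar_form X = (X 0 0 - X 1 1 - X 2 2 - X 3 3) + omult I (X 1 0 + X 0 1) + omult J (X 2 0 + X 0 2)
     + omult K (X 3 0 + X 0 3) + omult I (omult J (X 1 2 - X 2 1)) + omult I (omult K (X 1 3 - X 3 1))
     + omult J (omult K (X 2 3 - X 3 2))"

lemma DbarI_eq_dbar_form:
  assumes "open D" "stem_C1 D F" "induces D F f" "v \<in> Eset D"
  shows "DbarI f I J v = dbar_form (stem_partials F v)"
  unfolding DbarI_def pder_fI[OF assms(1-3) in_Nset assms(4)] dbar_form_def stem_partials_def
  using Sph_omult_left_twice[OF I_in_Sph] Sph_omult_left_twice[OF J_in_Sph] Sph_omult_left_twice[OF K_in_Sph]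
  by (simp add: omult_linear omult_left_anticommute algebra_simps flip: K_def)

lemma dbar_form_sign_twist:
  assumes "sign_vector s"
  shows "dbar_form (sign_twist s X) = (X 0 0 - X 1 1 - X 2 2 - X 3 3) + s 1 *\<^sub>R omult I (X 1 0 + X 0 1)
     + s 2 *\<^sub>R omult J (X 2 0 + X 0 2) + s 3 *\<^sub>R omult K (X 3 0 + X 0 3)
     + (s 1 * s 2) *\<^sub>R omult I (omult J (X 1 2 - X 2 1)) + (s 1 * s 3) *\<^sub>R omult I (omult K (X 1 3 - X 3 1))
     + (s 2 * s 3) *\<^sub>R omult J (omult K (X 2 3 - X 3 2))"
  using assms by (simp add: dbar_form_def sign_twist_pieces omult.scaleR_right)

lemma sign_twists_dbar_form_imp_split_fueter:
  assumes twists: "\<And>s. sign_vector s \<Longrightarrow> dbar_form (sign_twist s X) = 0"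
  shows "split_fueter X"
proof -
  have "X 0 0 - X 1 1 - X 2 2 - X 3 3 = 0 \<and> omult I (X 1 0 + X 0 1) = 0 \<and> omult J (X 2 0 + X 0 2) = 0
      \<and> omult K (X 3 0 + X 0 3) = 0 \<and> omult I (omult J (X 1 2 - X 2 1)) = 0
      \<and> omult I (omult K (X 1 3 - X 3 1)) = 0 \<and> omult J (omult K (X 2 3 - X 3 2)) = 0"
  proof (rule sign_character_expansion_eq_0)
    fix s1 s2 s3 :: real
    assume "s1 \<in> {1, -1}" "s2 \<in> {1, -1}" "s3 \<in> {1, -1}"
    then have s: "sign_vector (signs s1 s2 s3)"
      by (rule sign_vector_signs)
    from twists[OF s] show "(X 0 0 - X 1 1 - X 2 2 - X 3 3) + s1 *\<^sub>R omult I (X 1 0 + X 0 1)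
        + s2 *\<^sub>R omult J (X 2 0 + X 0 2) + s3 *\<^sub>R omult K (X 3 0 + X 0 3)
        + (s1 * s2) *\<^sub>R omult I (omult J (X 1 2 - X 2 1)) + (s1 * s3) *\<^sub>R omult I (omult K (X 1 3 - X 3 1))
        + (s2 * s3) *\<^sub>R omult J (omult K (X 2 3 - X 3 2)) = 0"
      unfolding dbar_form_sign_twist[OF s] by simp
  qed
  then show ?thesis
    by (simp add: split_fueter_def Sph_omult_left_eq_0_iff I_in_Sph J_in_Sph K_in_Sph)
qed

lemma split_fueter_imp_dbar_form_eq_0: "split_fueter X \<Longrightarrow> dbar_form X = 0"
  by (simp add: split_fueter_def dbar_form_def omult.zero_right)

lemma DbarI_eq_0_iff_fueter_system:
  assumes "open D" "o3_stem D F" "stem_C1 D F" "induces D F f"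
  shows "(\<forall>v\<in>Eset D. DbarI f I J v = 0) \<longleftrightarrow> fueter_system D F"
proof -
  have "(\<forall>v\<in>Eset D. DbarI f I J v = 0) \<longleftrightarrow> (\<forall>v\<in>Eset D. dbar_form (stem_partials F v) = 0)"
    using DbarI_eq_dbar_form[OF assms(1,3,4)] by simp
  also have "\<dots> \<longleftrightarrow> (\<forall>v\<in>Eset D. split_fueter (stem_partials F v))"
    by (rule partials_condition_iff_split_fueter[where P = "\<lambda>X. dbar_form X = 0", OF assms(1-3)])
      (use sign_twists_dbar_form_imp_split_fueter split_fueter_imp_dbar_form_eq_0 in blast)+
  also have "\<dots> \<longleftrightarrow> fueter_system D F"
    using fueter_system_iff_split_fueter[OF assms(1-3)] by simp
  finally show ?thesis .
qed

end

theorem mainTheorem9: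
  fixes D :: "(real \<times> real) set"
    and F :: "4 \<Rightarrow> real ^ 4 \<Rightarrow> oct"
    and f :: "oct \<Rightarrow> oct"
  assumes "open D" and "D \<noteq> {}"
    and "\<forall>x0 x1. (x0, x1) \<in> D \<longrightarrow> (x0, - x1) \<in> D"
    and "connected (OmegaD D)"
    and "o3_stem D F" and "stem_C1 D F" and "induces D F f"
  shows "slice_fueter_regular D f \<longleftrightarrow>
    (\<exists>(I, J) \<in> Nset. \<forall>v. opoint I J v \<in> OmegaD D \<inter> HI I J \<longrightarrow> DbarI f I J v = 0)"
proof -
  have slice: "(\<forall>v. opoint I J v \<in> OmegaD D \<inter> HI I J \<longrightarrow> DbarI f I J v = 0) \<longleftrightarrow>
      (\<forall>v\<in>Eset D. DbarI f I J v = 0)" if "(I, J) \<in> Nset" for I J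
    using orthogonal_units.opoint_in_OmegaD_iff[OF _ assms(3)] that opoint_in_HI
    by (simp add: orthogonal_units_def Ball_def)
  show ?thesis
  proof
    assume "slice_fueter_regular D f"
    then obtain G where "o3_stem D G" "stem_C1 D G" "induces D G f" "fueter_system D G"
      by (auto simp: slice_fueter_regular_def)
    with standard_units_in_Nset show "\<exists>(I, J) \<in> Nset. \<forall>v. opoint I J v \<in> OmegaD D \<inter> HI I J \<longrightarrow> DbarI f I J v = 0"
      using orthogonal_units.DbarI_eq_0_iff_fueter_system[OF _ assms(1)] slice
      by (fastforce simp: orthogonal_units_def)
  next
    assume "\<exists>(I, J) \<in> Nset. \<forall>v. opoint I J v \<in> OmegaD D \<inter> HI I J \<longrightarrow> DbarI f I J v = 0"
    then have "fueter_system D F"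
      using orthogonal_units.DbarI_eq_0_iff_fueter_system[OF _ assms(1,5,6,7)] slice
      by (auto simp: orthogonal_units_def)
    with assms(5-7) show "slice_fueter_regular D f"
      by (auto simp: slice_fueter_regular_def)
  qed
qed

end
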